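(* In the truncated Gale–Shapley algorithm described in the context, with a weight function $w$ respecting the preferences, for every $i\ge 2$ we have $w(L_i)\ge (i-1)\,f_i(R)$.
   Context: Instance: a simple bipartite graph $\mathcal{G}=(R\cup B,E)$ (red nodes $R$, blue nodes $B$) without isolated nodes, each node having a linear preference order on its neighbours. Algorithm (distributed Gale–Shapley): each blue $b$ keeps $p(b)$ (current partner or $\bot$), initially $\bot$. Each red $r$ keeps a list $C(r)$, initially all neighbours in decreasing preference; $c(r)$ (candidate awaiting response, or $\bot$), initially $\bot$; $p(r)$ (partner or $\bot$), initially $\bot$. Each round consists of a blue turn then a red turn. Blue turn, for each $b$: let $P$ be the set of neighbours that sent `propose'; if $P=\emptyset$ do nothing. Otherwise let $Q=P\cup\{p(b)\}$ if $p(b)\ne\bot$, else $Q=P$; let $q$ be $b$'s most preferred node in $Q$; if $q\ne p(b)$, send `break' to $p(b)$ (if $p(b)\ne\bot$), send `accept' to $q$, and set $p(b)\gets q$; send `reject' to every $r\in P\setminus\{q\}$. Red turn, for each $r$: (1) if $c(r)\neq\bot$, receive the message from $c(r)$; if `accept' set $p(r)\gets c(r)$; if `reject' remove $c(r)$ from $C(r)$; then set $c(r)\gets\bot$. (2) If $p(r)\ne\bot$ and $p(r)$ sent `break', remove $p(r)$ from $C(r)$ and set $p(r)\gets\bot$. (3) If $p(r)=\bot$ and $C(r)$ is nonempty, set $c(r)$ to the first element of $C(r)$ and send `propose' to it. Notation: a subscript $i$ denotes the value at the end of round $i$. An edge $\{r,b\}$ is lost when $r$ removes $b$ from $C(r)$;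 $L_i\subseteq E$ is the set of edges lost by the end of round $i$. Let $w:E\to\mathbb{Z}_{>0}$ be a weight function respecting preferences: whenever a node $v$ prefers $x$ over $y$, $w(\{v,x\})\ge w(\{v,y\})$; $w(F)=\sum_{e\in F}w(e)$. The potential of $r\in R$ at the end of round $i$ is $f_i(r)=0$ if $r$ is matched ($p_i(r)\neq\bot$) or $C_i(r)$ is empty, and otherwise $f_i(r)=w(\{r,b\})$ where $b$ is the first element of $C_i(r)$; $f_i(R)=\sum_{r\in R}f_i(r)$. *)

theory Defs
  imports Main
begin

(* Preferences are given as lists: earlier = more preferred. *)
definition prefers :: "'a list \<Rightarrow> 'a \<Rightarrow> 'a \<Rightarrow> bool" where
  "prefers xs x y \<longleftrightarrow> (\<exists>i j. i < j \<and> j < length xs \<and> xs ! i = x \<and> xs ! j = y)"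

definition gs_instance ::
  "'r set \<Rightarrow> 'b set \<Rightarrow> ('r \<times> 'b) set \<Rightarrow> ('r \<Rightarrow> 'b list) \<Rightarrow> ('b \<Rightarrow> 'r list) \<Rightarrow> bool" where
  "gs_instance R B E prefR prefB \<longleftrightarrow>
     finite R \<and> finite B \<and> E \<subseteq> R \<times> B \<and>
     (\<forall>r\<in>R. \<exists>b. (r,b) \<in> E) \<and> (\<forall>b\<in>B. \<exists>r. (r,b) \<in> E) \<and>
     (\<forall>r\<in>R. distinct (prefR r) \<and> set (prefR r) = {b. (r,b) \<in> E}) \<and>
     (\<forall>b\<in>B. distinct (prefB b) \<and> set (prefB b) = {r. (r,b) \<in> E})"

definition respects_prefs ::
  "('r \<times> 'b) set \<Rightarrow> ('r \<Rightarrow> 'b list) \<Rightarrow> ('b \<Rightarrow> 'r list) \<Rightarrow> ('r \<Rightarrow> 'b \<Rightarrow> nat) \<Rightarrow> bool" where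
  "respects_prefs E prefR prefB w \<longleftrightarrow>
     (\<forall>e\<in>E. w (fst e) (snd e) > 0) \<and>
     (\<forall>r b1 b2. (r,b1) \<in> E \<and> (r,b2) \<in> E \<and> prefers (prefR r) b1 b2 \<longrightarrow> w r b1 \<ge> w r b2) \<and>
     (\<forall>b r1 r2. (r1,b) \<in> E \<and> (r2,b) \<in> E \<and> prefers (prefB b) r1 r2 \<longrightarrow> w r1 b \<ge> w r2 b)"

(* State at the end of a round. cand r = c(r) (the node r proposed to in the last
   red turn, or None); lost = set of edges lost so far. *)
record ('r, 'b) gs_state =
  pB   :: "'b \<Rightarrow> 'r option"
  cand :: "'r \<Rightarrow> 'b option"
  pR   :: "'r \<Rightarrow> 'b option"
  Cl   :: "'r \<Rightarrow> 'b list"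
  lost :: "('r \<times> 'b) set"

definition gs_init :: "'r set \<Rightarrow> ('r \<Rightarrow> 'b list) \<Rightarrow> ('r, 'b) gs_state" where
  "gs_init R prefR = \<lparr> pB = (\<lambda>_. None), cand = (\<lambda>_. None), pR = (\<lambda>_. None),
      Cl = (\<lambda>r. if r \<in> R then prefR r else []), lost = {} \<rparr>"

(* Blue turn: P = set of reds that sent 'propose' to b in the previous red turn. *)
definition props :: "('r, 'b) gs_state \<Rightarrow> 'b \<Rightarrow> 'r set" where
  "props st b = {r. cand st r = Some b}"

definition best :: "('b \<Rightarrow> 'r list) \<Rightarrow> ('r, 'b) gs_state \<Rightarrow> 'b \<Rightarrow> 'r" where
  "best prefB st b = hd (filter (\<lambda>x. x \<in> props st b \<union> set_option (pB st b)) (prefB b))"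

definition changes :: "('b \<Rightarrow> 'r list) \<Rightarrow> ('r, 'b) gs_state \<Rightarrow> 'b \<Rightarrow> bool" where
  "changes prefB st b \<longleftrightarrow> props st b \<noteq> {} \<and> Some (best prefB st b) \<noteq> pB st b"

definition msg_accept :: "('b \<Rightarrow> 'r list) \<Rightarrow> ('r, 'b) gs_state \<Rightarrow> 'b \<Rightarrow> 'r \<Rightarrow> bool" where
  "msg_accept prefB st b r \<longleftrightarrow> changes prefB st b \<and> r = best prefB st b"

definition msg_reject :: "('b \<Rightarrow> 'r list) \<Rightarrow> ('r, 'b) gs_state \<Rightarrow> 'b \<Rightarrow> 'r \<Rightarrow> bool" where
  "msg_reject prefB st b r \<longleftrightarrow> props st b \<noteq> {} \<and> r \<in> props st b \<and> r \<noteq> best prefB st b"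

definition msg_break :: "('b \<Rightarrow> 'r list) \<Rightarrow> ('r, 'b) gs_state \<Rightarrow> 'b \<Rightarrow> 'r \<Rightarrow> bool" where
  "msg_break prefB st b r \<longleftrightarrow> changes prefB st b \<and> pB st b = Some r"

definition new_pB :: "('b \<Rightarrow> 'r list) \<Rightarrow> ('r, 'b) gs_state \<Rightarrow> 'b \<Rightarrow> 'r option" where
  "new_pB prefB st b = (if changes prefB st b then Some (best prefB st b) else pB st b)"

(* Red turn for r: returns (new C(r), new c(r), new p(r), edges lost by r in this turn). *)
definition red_update ::
  "('b \<Rightarrow> 'r list) \<Rightarrow> ('r, 'b) gs_state \<Rightarrow> 'r \<Rightarrow> 'b list \<times> 'b option \<times> 'b option \<times> ('r \<times> 'b) set" where
  "red_update prefB st r =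
    (let C0 = Cl st r; p0 = pR st r;
         (C1, p1, L1) = (case cand st r of
             None \<Rightarrow> (C0, p0, {})
           | Some b \<Rightarrow>
               if msg_accept prefB st b r then (C0, Some b, {})
               else if msg_reject prefB st b r
                 then (removeAll b C0, p0, if b \<in> set C0 then {(r, b)} else {})
               else (C0, p0, {}));
         (C2, p2, L2) = (case p1 of
             None \<Rightarrow> (C1, p1, {})
           | Some b' \<Rightarrow>
               if msg_break prefB st b' r
               then (removeAll b' C1, None, if b' \<in> set C1 then {(r, b')} else {})
               else (C1, p1, {}));
         c3 = (if p2 = None \<and> C2 \<noteq> [] then Some (hd C2) else None)
     in (C2, c3, p2, L1 \<union> L2))"

definition gs_round :: "('b \<Rightarrow> 'r list) \<Rightarrow> ('r, 'b) gs_state \<Rightarrow> ('r, 'b) gs_state" where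
  "gs_round prefB st =
     \<lparr> pB = new_pB prefB st,
       cand = (\<lambda>r. fst (snd (red_update prefB st r))),
       pR = (\<lambda>r. fst (snd (snd (red_update prefB st r)))),
       Cl = (\<lambda>r. fst (red_update prefB st r)),
       lost = lost st \<union> (\<Union>r. snd (snd (snd (red_update prefB st r)))) \<rparr>"

(* state at the end of round i (round 0 = initial state) *)
definition gs_state_at ::
  "'r set \<Rightarrow> ('r \<Rightarrow> 'b list) \<Rightarrow> ('b \<Rightarrow> 'r list) \<Rightarrow> nat \<Rightarrow> ('r, 'b) gs_state" where
  "gs_state_at R prefR prefB i = (gs_round prefB ^^ i) (gs_init R prefR)"

definition potential :: "('r \<Rightarrow> 'b \<Rightarrow> nat) \<Rightarrow> ('r, 'b) gs_state \<Rightarrow> 'r \<Rightarrow> nat" where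
  "potential w st r = (if pR st r \<noteq> None \<or> Cl st r = [] then 0 else w r (hd (Cl st r)))"

definition weight_of :: "('r \<Rightarrow> 'b \<Rightarrow> nat) \<Rightarrow> ('r \<times> 'b) set \<Rightarrow> nat" where
  "weight_of w F = (\<Sum>e\<in>F. w (fst e) (snd e))"

end

theory Submission imports Defs begin

text \<open>
  Every red's list C(r) is its preference list minus its lost edges, so its head has maximal
  weight, and C(r) only ever loses its head. Hence a red that is free with nonempty C(r) after
  round i+1 lost its previous head in that round, an edge of weight at least f_{i+1}(r); this
  gives w(L_{i+1}) \<ge> w(L_i) + f_{i+1}(R). Moreover f_{i+1}(R) \<le> f_i(R): a rejected red
  had potential equal to the weight of the rejecting edge, and a red dropped by b is charged to
  the red that b accepted instead, whose potential was its weight on b, which b prefers.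
\<close>

lemma prefers_Cons: "prefers xs x y \<Longrightarrow> prefers (a # xs) x y"
  unfolding prefers_def by (metis Suc_less_eq length_Cons nth_Cons_Suc)

lemma prefers_Cons_hd: "y \<in> set xs \<Longrightarrow> prefers (a # xs) a y"
  unfolding prefers_def
  by (metis in_set_conv_nth length_Cons not_less_eq nth_Cons_0 nth_Cons_Suc zero_less_Suc)

lemma prefers_hd_filter: "filter P xs = x # ys \<Longrightarrow> y \<in> set ys \<Longrightarrow> prefers xs x y"
proof (induction xs arbitrary: ys)
  case (Cons a xs)
  then show ?case by (cases "P a") (auto intro: prefers_Cons prefers_Cons_hd)
qed simp

lemma removeAll_hd: "distinct xs \<Longrightarrow> removeAll (hd xs) xs = tl xs"
  by (cases xs) (auto simp: distinct_removeAll)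

lemma filter_neq_hd_filter:
  assumes "distinct xs"
  shows "filter (\<lambda>x. P x \<and> x \<noteq> hd (filter P xs)) xs = tl (filter P xs)"
proof -
  have "filter (\<lambda>x. P x \<and> x \<noteq> hd (filter P xs)) xs = removeAll (hd (filter P xs)) (filter P xs)"
    by (auto simp: removeAll_filter_not_eq intro!: filter_cong)
  also have "\<dots> = tl (filter P xs)" using removeAll_hd[of "filter P xs"] assms by simp
  finally show ?thesis .
qed

lemma gs_round_fields:
  "pB (gs_round prefB st) = new_pB prefB st"
  "cand (gs_round prefB st) r = fst (snd (red_update prefB st r))"
  "pR (gs_round prefB st) r = fst (snd (snd (red_update prefB st r)))"
  "Cl (gs_round prefB st) r = fst (red_update prefB st r)"
  "lost (gs_round prefB st) = lost st \<union> (\<Union>r. snd (snd (snd (red_update prefB st r))))"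
  by (simp_all add: gs_round_def)

lemma gs_state_at_Suc:
  "gs_state_at R prefR prefB (Suc i) = gs_round prefB (gs_state_at R prefR prefB i)"
  by (simp add: gs_state_at_def)

abbreviation proposal :: "'a list \<Rightarrow> 'a option" where
  "proposal xs \<equiv> (if xs \<noteq> [] then Some (hd xs) else None)"

lemma cand_gs_round:
  "cand (gs_round prefB st) r =
     (if pR (gs_round prefB st) r = None then proposal (Cl (gs_round prefB st) r) else None)"
  by (auto simp: gs_round_fields red_update_def Let_def split: prod.split)

text \<open>Holds after every round, though not initially: a free red with a nonempty list proposes.\<close>

definition idle_exhausted :: "('r, 'b) gs_state \<Rightarrow> bool" where
  "idle_exhausted st \<longleftrightarrow> (\<forall>r. pR st r = None \<and> cand st r = None \<longrightarrow> Cl st r = [])"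

lemma idle_exhausted_gs_round: "idle_exhausted (gs_round prefB st)"
  unfolding idle_exhausted_def by (simp add: cand_gs_round split: if_splits)

lemma best_in:
  assumes "props st b \<noteq> {}" "props st b \<subseteq> set (prefB b)"
  shows "best prefB st b \<in> props st b \<union> set_option (pB st b)"
proof -
  let ?Q = "\<lambda>x. x \<in> props st b \<union> set_option (pB st b)"
  have "filter ?Q (prefB b) \<noteq> []" using assms by (auto simp: filter_empty_conv)
  from hd_in_set[OF this] show ?thesis unfolding best_def set_filter by blast
qed

lemma best_in_props: "changes prefB st b \<Longrightarrow> props st b \<subseteq> set (prefB b) \<Longrightarrow> best prefB st b \<in> props st b"
  using best_in[of st b prefB] by (auto simp: changes_def)

locale gale_shapley =
  fixes R :: "'r set" and B :: "'b set" and E :: "('r \<times> 'b) set"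
    and prefR :: "'r \<Rightarrow> 'b list" and prefB :: "'b \<Rightarrow> 'r list"
  assumes valid_instance: "gs_instance R B E prefR prefB"
begin

lemma finite_R: "finite R"
  and edges_subset: "E \<subseteq> R \<times> B"
  and distinct_prefR: "r \<in> R \<Longrightarrow> distinct (prefR r)"
  and set_prefR: "r \<in> R \<Longrightarrow> set (prefR r) = {b. (r, b) \<in> E}"
  and set_prefB: "b \<in> B \<Longrightarrow> set (prefB b) = {r. (r, b) \<in> E}"
  using valid_instance unfolding gs_instance_def by auto

lemma finite_E: "finite E"
  using valid_instance finite_subset[OF edges_subset] unfolding gs_instance_def by blast

definition invariant :: "('r, 'b) gs_state \<Rightarrow> bool" where
  "invariant st \<longleftrightarrow>
     lost st \<subseteq> E \<and>
     (\<forall>r\<in>R. Cl st r = filter (\<lambda>b. (r, b) \<notin> lost st) (prefR r)) \<and>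
     (\<forall>r. r \<notin> R \<longrightarrow> Cl st r = []) \<and>
     (\<forall>b r. pB st b = Some r \<longrightarrow> pR st r = Some b) \<and>
     (\<forall>r b. cand st r = Some b \<longrightarrow> pR st r = None \<and> Cl st r \<noteq> [] \<and> hd (Cl st r) = b) \<and>
     (\<forall>r b. pR st r = Some b \<longrightarrow> Cl st r \<noteq> [] \<and> hd (Cl st r) = b)"

lemma
  assumes "invariant st"
  shows lost_subset: "lost st \<subseteq> E"
    and Cl_eq_filter: "r \<in> R \<Longrightarrow> Cl st r = filter (\<lambda>b. (r, b) \<notin> lost st) (prefR r)"
    and Cl_outside: "r \<notin> R \<Longrightarrow> Cl st r = []"
    and pB_partner: "pB st b = Some r \<Longrightarrow> pR st r = Some b"
    and cand_hd_Cl: "cand st r = Some b \<Longrightarrow> pR st r = None \<and> Cl st r \<noteq> [] \<and> hd (Cl st r) = b"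
    and pR_hd_Cl: "pR st r = Some b \<Longrightarrow> Cl st r \<noteq> [] \<and> hd (Cl st r) = b"
  using assms unfolding invariant_def by blast+

lemma distinct_Cl: "invariant st \<Longrightarrow> distinct (Cl st r)"
  by (cases "r \<in> R") (simp_all add: Cl_eq_filter Cl_outside distinct_prefR)

lemma Cl_edge: "invariant st \<Longrightarrow> b \<in> set (Cl st r) \<Longrightarrow> (r, b) \<in> E"
  by (cases "r \<in> R") (auto simp: Cl_eq_filter Cl_outside set_prefR)

lemma props_subset_prefB:
  assumes "invariant st"
  shows "props st b \<subseteq> set (prefB b)"
proof
  fix r assume "r \<in> props st b"
  then have "cand st r = Some b" by (simp add: props_def)
  then have "(r, b) \<in> E" using cand_hd_Cl[OF assms] Cl_edge[OF assms] by (metis list.set_sel(1))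
  then show "r \<in> set (prefB b)" using edges_subset set_prefB by auto
qed

lemma red_update_cases:
  assumes inv: "invariant st"
  obtains
    (accepted) "cand st r = Some (hd (Cl st r))" "msg_accept prefB st (hd (Cl st r)) r"
      "pR st r = None" "Cl st r \<noteq> []"
      "red_update prefB st r = (Cl st r, None, Some (hd (Cl st r)), {})"
  | (rejected) "cand st r = Some (hd (Cl st r))" "\<not> msg_accept prefB st (hd (Cl st r)) r"
      "pR st r = None" "Cl st r \<noteq> []"
      "red_update prefB st r = (tl (Cl st r), proposal (tl (Cl st r)), None, {(r, hd (Cl st r))})"
  | (broken) "cand st r = None" "pR st r = Some (hd (Cl st r))"
      "msg_break prefB st (hd (Cl st r)) r" "Cl st r \<noteq> []"
      "red_update prefB st r = (tl (Cl st r), proposal (tl (Cl st r)), None, {(r, hd (Cl st r))})"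
  | (kept) "cand st r = None" "pR st r = Some (hd (Cl st r))"
      "\<not> msg_break prefB st (hd (Cl st r)) r" "Cl st r \<noteq> []"
      "red_update prefB st r = (Cl st r, None, Some (hd (Cl st r)), {})"
  | (idle) "cand st r = None" "pR st r = None"
      "red_update prefB st r = (Cl st r, proposal (Cl st r), None, {})"
proof (cases "cand st r")
  case (Some b)
  note c = cand_hd_Cl[OF inv Some]
  have b: "b \<in> set (Cl st r)" using c by (metis list.set_sel(1))
  have "\<not> msg_break prefB st b r" if "msg_accept prefB st b r"
    using that by (auto simp: msg_accept_def msg_break_def changes_def)
  moreover have "msg_reject prefB st b r" if "\<not> msg_accept prefB st b r"
    \<comment> \<open>otherwise r would already be b's partner, but a proposing red is free\<close>
  proof (rule ccontr)
    assume "\<not> msg_reject prefB st b r"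
    moreover have "r \<in> props st b" using Some by (simp add: props_def)
    ultimately have "pB st b = Some r"
      using that by (auto simp: msg_reject_def msg_accept_def changes_def)
    then show False using pB_partner[OF inv] c by simp
  qed
  ultimately show ?thesis
    using that(1,2) Some c b removeAll_hd[OF distinct_Cl[OF inv]]
    by (cases "msg_accept prefB st b r") (auto simp: red_update_def Let_def)
next
  case None
  show ?thesis
  proof (cases "pR st r")
    case (Some b)
    note c = pR_hd_Cl[OF inv Some]
    have "b \<in> set (Cl st r)" using c by (metis list.set_sel(1))
    then show ?thesis
      using that(3,4) None Some c removeAll_hd[OF distinct_Cl[OF inv]]
      by (cases "msg_break prefB st b r") (auto simp: red_update_def Let_def)
  qed (use that(5) None in \<open>simp add: red_update_def Let_def\<close>)
qed

abbreviation lost_in_round :: "('r, 'b) gs_state \<Rightarrow> 'r \<Rightarrow> ('r \<times> 'b) set" where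
  "lost_in_round st r \<equiv> snd (snd (snd (red_update prefB st r)))"

lemma Cl_gs_round_cases:
  assumes "invariant st"
  shows "Cl (gs_round prefB st) r = Cl st r \<and> lost_in_round st r = {} \<or>
         Cl st r \<noteq> [] \<and> Cl (gs_round prefB st) r = tl (Cl st r) \<and>
         lost_in_round st r = {(r, hd (Cl st r))}"
  by (cases rule: red_update_cases[OF assms, where r = r]) (simp_all add: gs_round_fields)

lemma lost_gs_round_iff:
  assumes "invariant st"
  shows "(r, b) \<in> lost (gs_round prefB st) \<longleftrightarrow> (r, b) \<in> lost st \<or> (r, b) \<in> lost_in_round st r"
proof -
  have "r' = r" if "(r, b) \<in> lost_in_round st r'" for r'
    using that Cl_gs_round_cases[OF assms, of r'] by auto
  then show ?thesis unfolding gs_round_fields by blast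
qed

lemma Cl_gs_round_eq_filter:
  assumes inv: "invariant st" and r: "r \<in> R"
  shows "Cl (gs_round prefB st) r = filter (\<lambda>b. (r, b) \<notin> lost (gs_round prefB st)) (prefR r)"
proof -
  have lost': "(\<lambda>b. (r, b) \<notin> lost (gs_round prefB st)) =
      (\<lambda>b. (r, b) \<notin> lost st \<and> (r, b) \<notin> lost_in_round st r)"
    using lost_gs_round_iff[OF inv] by blast
  show ?thesis
    using Cl_gs_round_cases[OF inv, of r]
  proof (elim disjE conjE)
    assume "Cl (gs_round prefB st) r = Cl st r" "lost_in_round st r = {}"
    then show ?thesis unfolding lost' Cl_eq_filter[OF inv r] by simp
  next
    assume "Cl (gs_round prefB st) r = tl (Cl st r)" "lost_in_round st r = {(r, hd (Cl st r))}"
    then show ?thesis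
      unfolding lost' Cl_eq_filter[OF inv r]
      using filter_neq_hd_filter[OF distinct_prefR[OF r]] by simp
  qed
qed

lemma pB_gs_round_partner:
  assumes inv: "invariant st" and p: "pB (gs_round prefB st) b = Some r"
  shows "pR (gs_round prefB st) r = Some b"
proof (cases "changes prefB st b")
  case True
  then have "r = best prefB st b" using p by (simp add: gs_round_fields new_pB_def)
  moreover have "r \<in> props st b"
    using best_in_props[OF True props_subset_prefB[OF inv]] calculation by simp
  ultimately have "cand st r = Some b" "msg_accept prefB st b r"
    using True by (simp_all add: props_def msg_accept_def)
  then show ?thesis
    by (cases rule: red_update_cases[OF inv, where r = r]) (auto simp: gs_round_fields)
next
  case False
  then have "pR st r = Some b" "\<not> msg_break prefB st b r"
    using p pB_partner[OF inv] by (simp_all add: gs_round_fields new_pB_def msg_break_def)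
  then show ?thesis
    by (cases rule: red_update_cases[OF inv, where r = r]) (auto simp: gs_round_fields)
qed

lemma invariant_gs_round:
  assumes inv: "invariant st"
  shows "invariant (gs_round prefB st)"
proof -
  have "lost (gs_round prefB st) \<subseteq> E"
  proof
    fix e assume "e \<in> lost (gs_round prefB st)"
    moreover obtain r b where e: "e = (r, b)" by fastforce
    ultimately consider "(r, b) \<in> lost st" | "Cl st r \<noteq> []" "b = hd (Cl st r)"
      using lost_gs_round_iff[OF inv] Cl_gs_round_cases[OF inv, of r] by auto
    then show "e \<in> E"
      by cases (use lost_subset[OF inv] Cl_edge[OF inv] e in auto)
  qed
  moreover have "pR (gs_round prefB st) r = Some b \<Longrightarrow>
      Cl (gs_round prefB st) r \<noteq> [] \<and> hd (Cl (gs_round prefB st) r) = b" for r b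
    by (cases rule: red_update_cases[OF inv, where r = r]) (auto simp: gs_round_fields)
  moreover have "Cl (gs_round prefB st) r = []" if "r \<notin> R" for r
    using Cl_gs_round_cases[OF inv, of r] Cl_outside[OF inv that] by auto
  ultimately show ?thesis
    unfolding invariant_def
    using Cl_gs_round_eq_filter[OF inv] pB_gs_round_partner[OF inv]
    by (auto simp: cand_gs_round split: if_splits)
qed

lemma invariant_init: "invariant (gs_init R prefR)"
  using set_prefR unfolding invariant_def gs_init_def by auto

lemma invariant_gs_state_at: "invariant (gs_state_at R prefR prefB i)"
proof (induction i)
  case 0
  show ?case by (simp add: gs_state_at_def invariant_init)
next
  case (Suc i)
  then show ?case by (simp add: gs_state_at_Suc invariant_gs_round)
qed

end

locale gale_shapley_weighted = gale_shapley R B E prefR prefB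
  for R :: "'r set" and B :: "'b set" and E prefR prefB +
  fixes w :: "'r \<Rightarrow> 'b \<Rightarrow> nat"
  assumes respects: "respects_prefs E prefR prefB w"
begin

lemma potential_cand: "invariant st \<Longrightarrow> cand st r = Some b \<Longrightarrow> potential w st r = w r b"
  using cand_hd_Cl unfolding potential_def by auto

lemma weight_le_hd_Cl:
  assumes inv: "invariant st" and b: "b \<in> set (tl (Cl st r))"
  shows "w r b \<le> w r (hd (Cl st r))"
proof -
  have r: "r \<in> R" using b Cl_outside[OF inv] by fastforce
  have "Cl st r \<noteq> []" using b by auto
  then have "filter (\<lambda>b. (r, b) \<notin> lost st) (prefR r) = hd (Cl st r) # tl (Cl st r)"
    using Cl_eq_filter[OF inv r] by simp
  then have "prefers (prefR r) (hd (Cl st r)) b" using prefers_hd_filter b by metis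
  moreover have "hd (Cl st r) \<in> set (Cl st r)" "b \<in> set (Cl st r)"
    using b by (cases "Cl st r"; simp)+
  ultimately show ?thesis
    using respects Cl_edge[OF inv] unfolding respects_prefs_def by blast
qed

lemma potential_gs_round_le_lost_hd:
  assumes inv: "invariant st" and ex: "idle_exhausted st"
    and pos: "potential w (gs_round prefB st) r > 0"
  shows "Cl st r \<noteq> [] \<and> lost_in_round st r = {(r, hd (Cl st r))} \<and> (r, hd (Cl st r)) \<notin> lost st
     \<and> potential w (gs_round prefB st) r \<le> w r (hd (Cl st r))"
proof -
  have new: "pR (gs_round prefB st) r = None" "Cl (gs_round prefB st) r \<noteq> []"
      "potential w (gs_round prefB st) r = w r (hd (Cl (gs_round prefB st) r))"
    using pos unfolding potential_def by (auto split: if_splits)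
  have drop: "Cl st r \<noteq> []" "Cl (gs_round prefB st) r = tl (Cl st r)"
      "lost_in_round st r = {(r, hd (Cl st r))}"
    using new(1,2) ex unfolding idle_exhausted_def
    by (cases rule: red_update_cases[OF inv, where r = r]; simp add: gs_round_fields)+
  have r: "r \<in> R" using drop Cl_outside[OF inv] by blast
  have "(r, hd (Cl st r)) \<notin> lost st"
    using hd_in_set[OF drop(1)] unfolding Cl_eq_filter[OF inv r] by simp
  moreover have "w r (hd (tl (Cl st r))) \<le> w r (hd (Cl st r))"
    using weight_le_hd_Cl[OF inv] new(2) drop(2) by simp
  ultimately show ?thesis using drop new(3) by simp
qed

lemma lost_weight_gs_round_ge:
  assumes inv: "invariant st" and ex: "idle_exhausted st"
  shows "weight_of w (lost st) + (\<Sum>r\<in>R. potential w (gs_round prefB st) r)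
           \<le> weight_of w (lost (gs_round prefB st))"
proof -
  let ?st = "gs_round prefB st"
  define S where "S = {r\<in>R. 0 < potential w ?st r}"
  define N where "N = (\<lambda>r. (r, hd (Cl st r))) ` S"
  note lost_hd = potential_gs_round_le_lost_hd[OF inv ex]
  have fin: "finite (lost ?st)"
    using finite_subset[OF lost_subset[OF invariant_gs_round[OF inv]] finite_E] .
  have sub: "lost st \<subseteq> lost ?st" by (simp add: gs_round_fields)
  have "N \<subseteq> lost ?st - lost st"
    using lost_hd unfolding N_def S_def gs_round_fields by blast
  then have "weight_of w N \<le> weight_of w (lost ?st - lost st)"
    unfolding weight_of_def using fin by (intro sum_mono2) auto
  moreover have "weight_of w (lost ?st) = weight_of w (lost ?st - lost st) + weight_of w (lost st)"
    unfolding weight_of_def using sum.subset_diff[OF sub fin] .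
  moreover have "weight_of w N = (\<Sum>r\<in>S. w r (hd (Cl st r)))"
    unfolding weight_of_def N_def by (subst sum.reindex) (auto simp: inj_on_def)
  moreover have "(\<Sum>r\<in>S. potential w ?st r) \<le> (\<Sum>r\<in>S. w r (hd (Cl st r)))"
    using lost_hd unfolding S_def by (intro sum_mono) blast
  moreover have "(\<Sum>r\<in>R. potential w ?st r) = (\<Sum>r\<in>S. potential w ?st r)"
    unfolding S_def by (rule sum.mono_neutral_right) (use finite_R in auto)
  ultimately show ?thesis by linarith
qed

lemma weight_broken_le_replacement:
  assumes inv: "invariant st" and br: "msg_break prefB st b x"
  obtains y where "cand st y = Some b" "msg_accept prefB st b y" "w x b \<le> w y b"
proof -
  have ch: "changes prefB st b" and pb: "pB st b = Some x" using br by (auto simp: msg_break_def)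
  define y where "y = best prefB st b"
  have "y \<in> props st b" using best_in_props[OF ch props_subset_prefB[OF inv]] by (simp add: y_def)
  then have cy: "cand st y = Some b" by (simp add: props_def)
  have acc: "msg_accept prefB st b y" using ch by (simp add: msg_accept_def y_def)
  have yx: "y \<noteq> x" using ch pb by (auto simp: changes_def y_def)
  have xb: "(x, b) \<in> E" using pR_hd_Cl[OF inv pB_partner[OF inv pb]] Cl_edge[OF inv] by force
  have yb: "(y, b) \<in> E" using cand_hd_Cl[OF inv cy] Cl_edge[OF inv] by force
  let ?Q = "\<lambda>z. z \<in> props st b \<union> set_option (pB st b)"
  have "x \<in> set (filter ?Q (prefB b))" using pb xb edges_subset set_prefB by auto
  moreover have "filter ?Q (prefB b) \<noteq> []" using calculation by (metis empty_iff list.set(1))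
  then have "filter ?Q (prefB b) = y # tl (filter ?Q (prefB b))"
    unfolding y_def best_def by simp
  ultimately have "prefers (prefB b) y x" using yx prefers_hd_filter by (metis set_ConsD)
  then have "w x b \<le> w y b" using respects xb yb unfolding respects_prefs_def by blast
  then show ?thesis using that cy acc by blast
qed

text \<open>The red charged to y: the one that y displaced as partner of b, otherwise y itself.\<close>

definition displaced :: "('r, 'b) gs_state \<Rightarrow> 'r \<Rightarrow> 'r" where
  "displaced st y = (case cand st y of
      Some b \<Rightarrow> if msg_accept prefB st b y \<and> pB st b \<noteq> None then the (pB st b) else y
    | None \<Rightarrow> y)"

lemma potential_gs_round_charged:
  assumes inv: "invariant st" and ex: "idle_exhausted st"
    and pos: "potential w (gs_round prefB st) x > 0"
  shows "\<exists>y\<in>R. displaced st y = x \<and> potential w (gs_round prefB st) x \<le> potential w st y"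
proof -
  have cand_R: "r \<in> R" if "cand st r = Some b" for r b
    using cand_hd_Cl[OF inv that] Cl_outside[OF inv] by blast
  note lost_hd = potential_gs_round_le_lost_hd[OF inv ex pos]
  from inv show ?thesis
  proof (cases rule: red_update_cases[where r = x])
    case rejected
    then have "displaced st x = x" by (simp add: displaced_def)
    moreover have "potential w (gs_round prefB st) x \<le> potential w st x"
      using lost_hd potential_cand[OF inv rejected(1)] by simp
    ultimately show ?thesis using cand_R[OF rejected(1)] by blast
  next
    case broken
    then obtain y where y: "cand st y = Some (hd (Cl st x))" "msg_accept prefB st (hd (Cl st x)) y"
        "w x (hd (Cl st x)) \<le> w y (hd (Cl st x))"
      using weight_broken_le_replacement[OF inv] by blast
    then have "displaced st y = x" using broken(3) by (simp add: displaced_def msg_break_def)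
    moreover have "potential w (gs_round prefB st) x \<le> potential w st y"
      using lost_hd y(3) potential_cand[OF inv y(1)] by simp
    ultimately show ?thesis using cand_R[OF y(1)] by blast
  qed (use lost_hd in simp_all)
qed

lemma potential_sum_gs_round_le:
  assumes inv: "invariant st" and ex: "idle_exhausted st"
  shows "(\<Sum>r\<in>R. potential w (gs_round prefB st) r) \<le> (\<Sum>r\<in>R. potential w st r)"
proof -
  let ?S = "{r\<in>R. 0 < potential w (gs_round prefB st) r}"
  have "(\<Sum>r\<in>R. potential w (gs_round prefB st) r) = (\<Sum>r\<in>?S. potential w (gs_round prefB st) r)"
    by (rule sum.mono_neutral_right) (use finite_R in auto)
  also have "\<dots> \<le> (\<Sum>r\<in>R. potential w st r)"
    using finite_R potential_gs_round_charged[OF inv ex]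
    by (intro sum_le_included[where i = "displaced st"]) auto
  finally show ?thesis .
qed

lemma lost_weight_ge_potential:
  "i * (\<Sum>r\<in>R. potential w (gs_state_at R prefR prefB (Suc i)) r)
     \<le> weight_of w (lost (gs_state_at R prefR prefB (Suc i)))"
proof (induction i)
  case (Suc i)
  let ?st = "gs_state_at R prefR prefB (Suc i)"
  have inv: "invariant ?st" by (rule invariant_gs_state_at)
  have ex: "idle_exhausted ?st" unfolding gs_state_at_Suc by (rule idle_exhausted_gs_round)
  let ?P = "\<lambda>st. \<Sum>r\<in>R. potential w st r"
  have "Suc i * ?P (gs_round prefB ?st) = ?P (gs_round prefB ?st) + i * ?P (gs_round prefB ?st)"
    by simp
  also have "\<dots> \<le> ?P (gs_round prefB ?st) + i * ?P ?st"
    using potential_sum_gs_round_le[OF inv ex] by simp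
  also have "\<dots> \<le> ?P (gs_round prefB ?st) + weight_of w (lost ?st)"
    using Suc.IH by simp
  also have "\<dots> \<le> weight_of w (lost (gs_round prefB ?st))"
    using lost_weight_gs_round_ge[OF inv ex] by simp
  finally show ?case by (simp only: gs_state_at_Suc[of R prefR prefB "Suc i"])
qed simp

end

theorem lemma4:
  fixes R :: "'r set" and B :: "'b set" and E :: "('r \<times> 'b) set"
    and prefR :: "'r \<Rightarrow> 'b list" and prefB :: "'b \<Rightarrow> 'r list"
    and w :: "'r \<Rightarrow> 'b \<Rightarrow> nat" and i :: nat
  assumes "gs_instance R B E prefR prefB"
    and "respects_prefs E prefR prefB w"
    and "i \<ge> 2"
  shows "weight_of w (lost (gs_state_at R prefR prefB i))
           \<ge> (i - 1) * (\<Sum>r\<in>R. potential w (gs_state_at R prefR prefB i) r)"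
proof -
  interpret gale_shapley_weighted R B E prefR prefB w
    using assms(1,2) by unfold_locales
  obtain m where "i = Suc m" using assms(3) by (cases i) auto
  then show ?thesis using lost_weight_ge_potential[of m] by simp
qed

end
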